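(* Let $S\in\mathbb{R}^{n\times n}$ be real symmetric, $D\in\mathbb{R}^{r\times r}$ diagonal, and $X\in\mathbb{R}^{n\times r}$ satisfy $(S-XX^{T})X=XD$. Then there exists $Y\in\mathbb{R}^{n\times r}$ with $Y^{T}Y$ diagonal such that $(S-YY^{T})Y=YD$, $YY^{T}=XX^{T}$, and $\langle D,Y^{T}Y\rangle=\langle D,X^{T}X\rangle$.
   Context: $\langle A,B\rangle=\mathrm{tr}(A^{T}B)$. *)

theory Defs
  imports "HOL-Analysis.Analysis"
begin

definition diagonal_mat :: "real^'n^'n \<Rightarrow> bool" where
  "diagonal_mat A \<longleftrightarrow> (\<forall>i j. i \<noteq> j \<longrightarrow> A $ i $ j = 0)"

definition frob_inner :: "real^'n^'m \<Rightarrow> real^'n^'m \<Rightarrow> real" where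
  "frob_inner A B = trace (transpose A ** B)"

end

theory Submission
  imports Defs
begin

text \<open>
  For \<open>G = X\<^sup>T X\<close>, multiplying the hypothesis by \<open>X\<^sup>T\<close> gives
  \<open>X\<^sup>T S X - G\<^sup>2 = G D\<close>. The left side is symmetric, so \<open>G D\<close> is symmetric, i.e. \<open>G\<close>
  commutes with \<open>D\<close>. Hence \<open>G\<close> preserves every eigenspace of \<open>D\<close> and, by the spectral
  theorem applied inside each of them, is diagonalised by an orthogonal \<open>Q\<close> whose columns are
  also eigenvectors of \<open>D\<close>, i.e. with \<open>D Q = Q D\<close>. Then \<open>Y = X Q\<close> works:
  \<open>Y Y\<^sup>T = X X\<^sup>T\<close>, \<open>(S - Y Y\<^sup>T) Y = X D Q = Y D\<close>, and
  \<open>tr (D Q\<^sup>T G Q) = tr (Q D Q\<^sup>T G) = tr (D G)\<close>.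
  The spectral theorem on an invariant subspace is proved variationally: a unit vector
  maximising \<open>x \<bullet> A x\<close> over the subspace is an eigenvector.
\<close>

lemma symmetric_matrix_inner_commute:
  fixes A :: "real^'n^'n"
  assumes "transpose A = A"
  shows "x \<bullet> (A *v y) = (A *v x) \<bullet> y"
  by (metis assms dot_lmul_matrix transpose_transpose vector_transpose_matrix)

lemma symmetric_matrix_eigenvectors_orthogonal:
  fixes A :: "real^'n^'n"
  assumes "transpose A = A" "A *v x = a *\<^sub>R x" "A *v y = b *\<^sub>R y" "a \<noteq> b"
  shows "x \<bullet> y = 0"
proof -
  have "b * (x \<bullet> y) = a * (x \<bullet> y)"
    using symmetric_matrix_inner_commute[OF assms(1), of x y] assms(2,3) by simp
  then show ?thesis using assms(4) by simp
qed

lemma quadratic_nonpos_imp_linear_coeff_zero: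
  fixes b c :: real
  assumes "\<And>t. 2 * t * b + t\<^sup>2 * c \<le> 0"
  shows "b = 0"
proof -
  define a where "a = \<bar>c\<bar> + 1"
  have a: "a > 0" "2 * a + c > 0" unfolding a_def by auto
  have "2 * (b / a) * b + (b / a)\<^sup>2 * c = b\<^sup>2 * (2 * a + c) / a\<^sup>2"
    using a by (simp add: field_simps power2_eq_square)
  then have "b\<^sup>2 * (2 * a + c) \<le> 0"
    using assms[of "b / a"] a by (simp add: divide_le_0_iff)
  then show "b = 0" using a by (simp add: mult_le_0_iff)
qed

lemma symmetric_matrix_maximizer_is_eigenvector:
  fixes A :: "real^'n^'n"
  assumes sym: "transpose A = A" and W: "subspace W"
    and inv: "\<And>x. x \<in> W \<Longrightarrow> A *v x \<in> W"
    and v: "v \<in> W" "v \<bullet> v = 1"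
    and max: "\<And>x. x \<in> W \<Longrightarrow> x \<bullet> (A *v x) \<le> (v \<bullet> (A *v v)) * (x \<bullet> x)"
  shows "A *v v = (v \<bullet> (A *v v)) *\<^sub>R v"
proof -
  define M where "M = v \<bullet> (A *v v)"
  define w where "w = A *v v - M *\<^sub>R v"
  have w: "w \<in> W" unfolding w_def using inv v W by (simp add: subspace_diff subspace_scale)
  have ww: "w \<bullet> w = (A *v v) \<bullet> w - M * (v \<bullet> w)"
    unfolding w_def by (simp add: inner_diff_left)
  have "2 * t * (w \<bullet> w) + t\<^sup>2 * (w \<bullet> (A *v w) - M * (w \<bullet> w)) \<le> 0" for t
  proof -
    have "v + t *\<^sub>R w \<in> W" using v w W by (simp add: subspace_add subspace_scale)
    then have le: "(v + t *\<^sub>R w) \<bullet> (A *v (v + t *\<^sub>R w))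
        \<le> M * ((v + t *\<^sub>R w) \<bullet> (v + t *\<^sub>R w))"
      unfolding M_def by (rule max)
    have quad: "(v + t *\<^sub>R w) \<bullet> (A *v (v + t *\<^sub>R w))
        = M + 2 * t * ((A *v v) \<bullet> w) + t\<^sup>2 * (w \<bullet> (A *v w))"
      using symmetric_matrix_inner_commute[OF sym, of v w] unfolding M_def
      by (simp add: matrix_vector_right_distrib matrix_vector_mult_scaleR inner_commute
          algebra_simps power2_eq_square)
    have norm: "(v + t *\<^sub>R w) \<bullet> (v + t *\<^sub>R w) = 1 + 2 * t * (v \<bullet> w) + t\<^sup>2 * (w \<bullet> w)"
      using v(2) by (simp add: inner_commute algebra_simps power2_eq_square)
    have "2 * t * (w \<bullet> w) + t\<^sup>2 * (w \<bullet> (A *v w) - M * (w \<bullet> w))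
        = (M + 2 * t * ((A *v v) \<bullet> w) + t\<^sup>2 * (w \<bullet> (A *v w)))
          - M * (1 + 2 * t * (v \<bullet> w) + t\<^sup>2 * (w \<bullet> w))"
      unfolding ww by (simp add: algebra_simps)
    then show ?thesis using le unfolding quad norm by linarith
  qed
  then have "w \<bullet> w = 0" by (rule quadratic_nonpos_imp_linear_coeff_zero)
  then show ?thesis unfolding w_def M_def by simp
qed

lemma symmetric_matrix_has_eigenvector_in_invariant_subspace:
  fixes A :: "real^'n^'n"
  assumes sym: "transpose A = A" and W: "subspace W" "W \<noteq> {0}"
    and inv: "\<And>x. x \<in> W \<Longrightarrow> A *v x \<in> W"
  obtains v \<mu> where "v \<in> W" "norm v = 1" "A *v v = \<mu> *\<^sub>R v"
proof -
  define K where "K = W \<inter> sphere 0 1"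
  define f where "f x = x \<bullet> (A *v x)" for x :: "real^'n"
  have "compact K" unfolding K_def
    by (rule closed_Int_compact) (simp_all add: closed_subspace W)
  moreover have "K \<noteq> {}"
  proof -
    obtain w where w: "w \<in> W" "w \<noteq> 0" using W subspace_0 by blast
    then have "(1 / norm w) *\<^sub>R w \<in> K" unfolding K_def using W by (simp add: subspace_scale)
    then show ?thesis by blast
  qed
  moreover have "continuous_on K f"
    unfolding f_def by (intro continuous_intros linear_continuous_on matrix_vector_mul_bounded_linear)
  ultimately obtain v where v: "v \<in> K" and v_max: "\<And>y. y \<in> K \<Longrightarrow> f y \<le> f v"
    using continuous_attains_sup by metis
  have vW: "v \<in> W" and nv: "norm v = 1" using v unfolding K_def by auto
  have "f x \<le> f v * (x \<bullet> x)" if x: "x \<in> W" for x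
  proof (cases "x = 0")
    case False
    have "f ((1 / norm x) *\<^sub>R x) \<le> f v"
      using x False W by (intro v_max) (simp add: K_def subspace_scale)
    moreover have "f ((1 / norm x) *\<^sub>R x) = f x / (x \<bullet> x)"
      unfolding f_def by (simp add: matrix_vector_mult_scaleR dot_square_norm power2_eq_square)
    ultimately show ?thesis using False by (simp add: divide_le_eq)
  qed (simp add: f_def)
  then have "A *v v = f v *\<^sub>R v"
    using nv unfolding f_def
    by (intro symmetric_matrix_maximizer_is_eigenvector[OF sym W(1) inv vW]) (auto simp: norm_eq_1)
  then show ?thesis using that vW nv by blast
qed

lemma symmetric_matrix_orthonormal_eigenbasis:
  fixes A :: "real^'n^'n"
  assumes sym: "transpose A = A"
  shows "subspace W \<Longrightarrow> (\<And>x. x \<in> W \<Longrightarrow> A *v x \<in> W) \<Longrightarrow>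
    \<exists>B \<subseteq> W. span B = W \<and> pairwise orthogonal B
      \<and> (\<forall>u\<in>B. norm u = 1 \<and> (\<exists>\<mu>. A *v u = \<mu> *\<^sub>R u))"
proof (induction "dim W" arbitrary: W rule: less_induct)
  case less
  show ?case
  proof (cases "W = {0}")
    case True
    then show ?thesis by (intro exI[of _ "{}"]) auto
  next
    case False
    obtain v \<mu> where v: "v \<in> W" "norm v = 1" "A *v v = \<mu> *\<^sub>R v"
      using symmetric_matrix_has_eigenvector_in_invariant_subspace[OF sym less.prems(1) False less.prems(2)] .
    have vv: "v \<bullet> v = 1" using v(2) by (simp add: norm_eq_1)
    define W' where "W' = W \<inter> {x. v \<bullet> x = 0}"
    have W': "subspace W'" unfolding W'_def
      by (intro subspace_inter less.prems(1) subspace_hyperplane)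
    have inv': "A *v x \<in> W'" if "x \<in> W'" for x
    proof -
      have "v \<bullet> (A *v x) = \<mu> * (v \<bullet> x)"
        using symmetric_matrix_inner_commute[OF sym, of v x] v(3) by simp
      then show ?thesis using that less.prems(2) unfolding W'_def by auto
    qed
    have "v \<notin> W'" using vv unfolding W'_def by simp
    then have "W' \<subset> W" using v(1) unfolding W'_def by blast
    then have "dim W' < dim W"
      using dim_psubset span_eq_iff W' less.prems(1) by metis
    then obtain B' where B': "B' \<subseteq> W'" "span B' = W'" "pairwise orthogonal B'"
      "\<forall>u\<in>B'. norm u = 1 \<and> (\<exists>\<mu>. A *v u = \<mu> *\<^sub>R u)"
      using less.hyps[OF _ W' inv'] by blast
    have "W \<subseteq> span (insert v B')"
    proof
      fix x assume "x \<in> W"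
      then have "x - (v \<bullet> x) *\<^sub>R v \<in> span B'"
        unfolding B'(2) W'_def using v(1) vv less.prems(1)
        by (simp add: subspace_diff subspace_scale inner_diff_right)
      then have "x - (v \<bullet> x) *\<^sub>R v + (v \<bullet> x) *\<^sub>R v \<in> span (insert v B')"
        by (meson span_add span_base span_mono span_scale insertI1 subset_insertI subsetD)
      then show "x \<in> span (insert v B')" by simp
    qed
    moreover have "insert v B' \<subseteq> W" using B'(1) v(1) unfolding W'_def by auto
    moreover then have "span (insert v B') \<subseteq> W" using less.prems(1) by (simp add: span_minimal)
    moreover have "pairwise orthogonal (insert v B')"
      using B'(1,3) unfolding W'_def by (auto simp: pairwise_insert orthogonal_def inner_commute)
    ultimately show ?thesis using B'(4) v by (intro exI[of _ "insert v B'"]) auto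
  qed
qed

definition eigenspace :: "real^'n^'n \<Rightarrow> real \<Rightarrow> (real^'n) set" where
  "eigenspace A c = {x. A *v x = c *\<^sub>R x}"

lemma subspace_eigenspace: "subspace (eigenspace A c)"
  by (auto simp: subspace_def eigenspace_def matrix_vector_right_distrib matrix_vector_mult_scaleR
      scaleR_add_right)

lemma eigenspace_invariant_commuting:
  assumes "A ** G = G ** A" "x \<in> eigenspace A c"
  shows "G *v x \<in> eigenspace A c"
proof -
  have "A *v (G *v x) = G *v (A *v x)"
    by (simp add: matrix_vector_mul_assoc assms(1))
  then show ?thesis using assms(2) by (simp add: eigenspace_def matrix_vector_mult_scaleR)
qed

lemma diagonal_mat_transpose: "diagonal_mat D \<Longrightarrow> transpose D = D"
  unfolding diagonal_mat_def transpose_def vec_eq_iff by (metis vec_lambda_beta)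

lemma diagonal_mat_vector_mult: "diagonal_mat D \<Longrightarrow> (D *v x) $ i = D $ i $ i * x $ i"
  unfolding diagonal_mat_def matrix_vector_mult_def
  by (simp add: sum.remove[of UNIV i] sum.neutral)

lemma diagonal_mat_mult_left: "diagonal_mat D \<Longrightarrow> (D ** M) $ i $ j = D $ i $ i * M $ i $ j"
  unfolding diagonal_mat_def matrix_matrix_mult_def
  by (simp add: sum.remove[of UNIV i] sum.neutral)

lemma diagonal_mat_mult_right: "diagonal_mat D \<Longrightarrow> (M ** D) $ i $ j = M $ i $ j * D $ j $ j"
  unfolding diagonal_mat_def matrix_matrix_mult_def
  by (simp add: sum.remove[of UNIV j] sum.neutral)

lemma eigenspace_diagonal_mat:
  "diagonal_mat D \<Longrightarrow> eigenspace D c = {x. \<forall>i. D $ i $ i \<noteq> c \<longrightarrow> x $ i = 0}"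
  by (auto simp: eigenspace_def vec_eq_iff diagonal_mat_vector_mult)

lemma dim_eigenspace_diagonal_mat:
  "diagonal_mat D \<Longrightarrow> dim (eigenspace D c) = card {k. D $ k $ k = c}"
  using dim_substandard_cart[where 'a=real, of "{k. D $ k $ k = c}"]
  by (simp add: eigenspace_diagonal_mat dim_vec_eq)

lemma transpose_mult_entry:
  fixes A :: "real^'m^'n"
  shows "(transpose A ** B) $ i $ j = column i A \<bullet> column j B"
  by (simp add: matrix_matrix_mult_def transpose_def column_def inner_vec_def)

lemma column_matrix_mult: "column j (A ** B) = A *v column j B"
  by (simp add: column_def matrix_matrix_mult_def matrix_vector_mult_def vec_eq_iff)

lemma commuting_with_diagonal_orthonormal_eigenvectors:
  fixes G D :: "real^'n^'n"
  assumes symG: "transpose G = G" and D: "diagonal_mat D" and comm: "D ** G = G ** D"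
  obtains q :: "'n \<Rightarrow> real^'n"
  where "\<And>k l. q k \<bullet> q l = (if k = l then 1 else 0)"
    and "\<And>k. \<exists>\<mu>. G *v q k = \<mu> *\<^sub>R q k"
    and "\<And>k. q k \<in> eigenspace D (D $ k $ k)"
proof -
  define level where "level c = {k. D $ k $ k = c}" for c
  have "\<exists>B \<subseteq> eigenspace D c. span B = eigenspace D c \<and> pairwise orthogonal B
      \<and> (\<forall>u\<in>B. norm u = 1 \<and> (\<exists>\<mu>. G *v u = \<mu> *\<^sub>R u))" for c
    by (intro symmetric_matrix_orthonormal_eigenbasis[OF symG] subspace_eigenspace
        eigenspace_invariant_commuting[OF comm])
  then obtain B where B: "\<And>c. B c \<subseteq> eigenspace D c" "\<And>c. span (B c) = eigenspace D c"
    "\<And>c. pairwise orthogonal (B c)" "\<And>c u. u \<in> B c \<Longrightarrow> norm u = 1 \<and> (\<exists>\<mu>. G *v u = \<mu> *\<^sub>R u)"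
    by metis
  have "\<exists>h. bij_betw h (level c) (B c)" for c
  proof -
    have indep: "independent (B c)"
      using B(3,4) by (intro pairwise_orthogonal_independent) fastforce+
    have "card (B c) = dim (span (B c))"
      using indep by (simp add: dim_span dim_eq_card_independent)
    also have "\<dots> = card (level c)"
      unfolding B(2) level_def by (rule dim_eigenspace_diagonal_mat[OF D])
    finally show ?thesis
      using indep by (intro finite_same_card_bij) (auto simp: independent_bound level_def)
  qed
  then obtain h where h: "\<And>c. bij_betw (h c) (level c) (B c)" by metis
  define q where "q k = h (D $ k $ k) k" for k
  have qB: "q k \<in> B (D $ k $ k)" for k
    unfolding q_def using bij_betw_apply[OF h] by (simp add: level_def)
  have "q k \<bullet> q l = 0" if "k \<noteq> l" for k l
  proof (cases "D $ k $ k = D $ l $ l")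
    case True
    then have "q k \<noteq> q l"
      using that bij_betw_imp_inj_on[OF h] unfolding q_def inj_on_def level_def by auto
    then show ?thesis
      using True qB[of k] qB[of l] B(3) by (auto simp: pairwise_def orthogonal_def)
  next
    case False
    then show ?thesis
      using qB[of k] qB[of l] B(1) diagonal_mat_transpose[OF D]
      by (intro symmetric_matrix_eigenvectors_orthogonal[of D _ "D $ k $ k" _ "D $ l $ l"])
        (auto simp: eigenspace_def)
  qed
  moreover have "q k \<bullet> q k = 1" for k
    using qB[of k] B(4) by (simp add: norm_eq_1)
  ultimately show ?thesis
    using that qB B(1,4) by (metis subsetD)
qed

lemma orthogonal_diagonalization_commuting_with_diagonal:
  fixes G D :: "real^'n^'n"
  assumes "transpose G = G" and D: "diagonal_mat D" and "D ** G = G ** D"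
  obtains Q where "orthogonal_matrix Q" "D ** Q = Q ** D" "diagonal_mat (transpose Q ** G ** Q)"
proof -
  obtain q :: "'n \<Rightarrow> real^'n" where q: "\<And>k l. q k \<bullet> q l = (if k = l then 1 else 0)"
    "\<And>k. \<exists>\<mu>. G *v q k = \<mu> *\<^sub>R q k" "\<And>k. q k \<in> eigenspace D (D $ k $ k)"
    using commuting_with_diagonal_orthonormal_eigenvectors[OF assms] by blast
  define Q :: "real^'n^'n" where "Q = (\<chi> i k. q k $ i)"
  have col: "column k Q = q k" for k
    unfolding Q_def column_def by (simp add: vec_eq_iff)
  have "orthogonal_matrix Q"
    unfolding orthogonal_matrix_orthonormal_columns col using q(1)
    by (simp add: norm_eq_1 orthogonal_def)
  moreover have "D ** Q = Q ** D"
  proof -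
    have "D $ i $ i * q k $ i = q k $ i * D $ k $ k" for i k
    proof -
      have "(D *v q k) $ i = D $ k $ k * q k $ i" using q(3)[of k] by (simp add: eigenspace_def)
      then show ?thesis by (simp add: diagonal_mat_vector_mult[OF D] mult.commute)
    qed
    then show ?thesis
      by (simp add: vec_eq_iff diagonal_mat_mult_left[OF D] diagonal_mat_mult_right[OF D] Q_def)
  qed
  moreover have "diagonal_mat (transpose Q ** G ** Q)"
    unfolding diagonal_mat_def
  proof (intro allI impI)
    fix k l :: 'n
    assume "k \<noteq> l"
    obtain \<mu> where "G *v q l = \<mu> *\<^sub>R q l" using q(2) by blast
    then show "(transpose Q ** G ** Q) $ k $ l = 0"
      using q(1) \<open>k \<noteq> l\<close>
      by (simp add: transpose_mult_entry column_matrix_mult col flip: matrix_mul_assoc)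
  qed
  ultimately show ?thesis using that by blast
qed

lemma transpose_diff: "transpose (A - B) = transpose A - transpose (B :: 'a::ring^'n^'m)"
  by (simp add: transpose_def vec_eq_iff)

lemma gram_matrix_commute_of_stationary:
  fixes S :: "real^'n^'n" and D :: "real^'r^'r" and X :: "real^'r^'n"
  assumes "transpose S = S" and "transpose D = D" and "(S - X ** transpose X) ** X = X ** D"
  shows "D ** (transpose X ** X) = (transpose X ** X) ** D"
proof -
  define T where "T = S - X ** transpose X"
  have symT: "transpose T = T"
    unfolding T_def using assms(1) by (simp add: transpose_diff matrix_transpose_mul)
  have GD: "(transpose X ** X) ** D = transpose X ** T ** X"
    using arg_cong[OF assms(3), of "(**) (transpose X)"]
    unfolding T_def by (simp add: matrix_mul_assoc)
  have "D ** (transpose X ** X) = transpose ((transpose X ** X) ** D)"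
    using assms(2) by (simp add: matrix_transpose_mul)
  also have "\<dots> = transpose X ** T ** X"
    unfolding GD using symT by (simp add: matrix_transpose_mul matrix_mul_assoc)
  finally show ?thesis unfolding GD .
qed

lemma outer_product_mult_orthogonal_matrix:
  fixes X :: "real^'r^'n"
  assumes "orthogonal_matrix Q"
  shows "(X ** Q) ** transpose (X ** Q) = X ** transpose X"
proof -
  have "(X ** Q) ** transpose (X ** Q) = X ** (Q ** transpose Q) ** transpose X"
    by (simp add: matrix_transpose_mul matrix_mul_assoc)
  then show ?thesis using assms by (simp add: orthogonal_matrix_def)
qed

lemma frob_inner_orthogonal_congruence:
  fixes D G Q :: "real^'n^'n"
  assumes "orthogonal_matrix Q" and "transpose D = D" and "D ** Q = Q ** D"
  shows "frob_inner D (transpose Q ** G ** Q) = frob_inner D G"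
proof -
  have "frob_inner D (transpose Q ** G ** Q) = trace ((D ** transpose Q ** G) ** Q)"
    unfolding frob_inner_def assms(2) by (simp add: matrix_mul_assoc)
  also have "\<dots> = trace (Q ** (D ** transpose Q ** G))"
    by (rule trace_mul_sym)
  also have "Q ** (D ** transpose Q ** G) = D ** (Q ** transpose Q) ** G"
    using assms(3) by (simp add: matrix_mul_assoc)
  also have "\<dots> = D ** G"
    using assms(1) by (simp add: orthogonal_matrix_def)
  finally show ?thesis unfolding frob_inner_def assms(2) .
qed

theorem lemma22:
  fixes S :: "real^'n^'n" and D :: "real^'r^'r" and X :: "real^'r^'n"
  assumes "transpose S = S"
    and "diagonal_mat D"
    and "(S - X ** transpose X) ** X = X ** D"
  shows "\<exists>Y :: real^'r^'n. diagonal_mat (transpose Y ** Y)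
           \<and> (S - Y ** transpose Y) ** Y = Y ** D
           \<and> Y ** transpose Y = X ** transpose X
           \<and> frob_inner D (transpose Y ** Y) = frob_inner D (transpose X ** X)"
proof -
  define G where "G = transpose X ** X"
  have symD: "transpose D = D" using assms(2) by (rule diagonal_mat_transpose)
  have "transpose G = G" unfolding G_def by (simp add: matrix_transpose_mul)
  moreover have "D ** G = G ** D"
    unfolding G_def using assms(1) symD assms(3) by (rule gram_matrix_commute_of_stationary)
  ultimately obtain Q where Q: "orthogonal_matrix Q" "D ** Q = Q ** D"
    "diagonal_mat (transpose Q ** G ** Q)"
    using orthogonal_diagonalization_commuting_with_diagonal assms(2) by blast
  define Y where "Y = X ** Q"
  have gram: "transpose Y ** Y = transpose Q ** G ** Q"
    unfolding Y_def G_def by (simp add: matrix_transpose_mul matrix_mul_assoc)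
  have outer: "Y ** transpose Y = X ** transpose X"
    unfolding Y_def using Q(1) by (rule outer_product_mult_orthogonal_matrix)
  have "(S - Y ** transpose Y) ** Y = ((S - X ** transpose X) ** X) ** Q"
    unfolding outer by (simp add: Y_def matrix_mul_assoc)
  also have "\<dots> = Y ** D"
    unfolding assms(3) Y_def by (simp add: Q(2) flip: matrix_mul_assoc)
  finally have "(S - Y ** transpose Y) ** Y = Y ** D" .
  then show ?thesis
    using Q(3) gram outer frob_inner_orthogonal_congruence[OF Q(1) symD Q(2)]
    unfolding G_def by (intro exI[of _ Y]) simp
qed

end
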